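(* Let $T$ be a tree, with all vertex capacities equal to $1$, given a rooted planar embedding whose root is a leaf, and let $E$ be the set of edges from each non-leaf vertex to its first child (in the planar order). Then the tree associated to $(T,E)$ has distributable capacity. Moreover, if $E'$ is any set of edges of $T$ with $E'\cap E=\emptyset$ and $U$ is a connected component of the forest obtained by deleting $E'$ from $T$, then the tree associated to $(U,E\cap E(U))$ also has distributable capacity.
   Context: For a tree $T$ with vertex capacities $\mathrm{cap}(v)$ and a subset $E$ of its edges, the tree associated to $(T,E)$ is the tree whose vertices are the connected components of the forest obtained from $T$ by deleting the edges in $E$, whose edges are the edges of $E$, and in which the capacity of a component is the sum of the capacities of its vertices. A tree with capacities has distributable capacity if every vertex $v$ satisfies $\mathrm{cap}(v)\ge\deg(v)-1$. *)

theory Defs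
  imports Main
begin

definition graph :: "'a set \<Rightarrow> 'a set set \<Rightarrow> bool" where
  "graph V F \<longleftrightarrow> finite V \<and> (\<forall>e\<in>F. e \<subseteq> V \<and> card e = 2)"

definition adj :: "'a set set \<Rightarrow> ('a \<times> 'a) set" where
  "adj F = {(x, y). {x, y} \<in> F}"

definition connected_in :: "'a set set \<Rightarrow> 'a \<Rightarrow> 'a \<Rightarrow> bool" where
  "connected_in F x y \<longleftrightarrow> (x, y) \<in> (adj F)\<^sup>*"

definition comps :: "'a set \<Rightarrow> 'a set set \<Rightarrow> 'a set set" where
  "comps V F = V // {(x, y). x \<in> V \<and> y \<in> V \<and> connected_in F x y}"

definition is_tree :: "'a set \<Rightarrow> 'a set set \<Rightarrow> bool" where
  "is_tree V F \<longleftrightarrow> graph V F \<and> V \<noteq> {} \<and>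
     (\<forall>x\<in>V. \<forall>y\<in>V. connected_in F x y) \<and>
     (\<forall>x y. {x, y} \<in> F \<longrightarrow> \<not> connected_in (F - {{x, y}}) x y)"

definition deg :: "'a set set \<Rightarrow> 'a \<Rightarrow> nat" where
  "deg F v = card {e \<in> F. v \<in> e}"

definition child_of :: "'a set set \<Rightarrow> 'a \<Rightarrow> 'a \<Rightarrow> 'a \<Rightarrow> bool" where
  "child_of F r u v \<longleftrightarrow> {u, v} \<in> F \<and> connected_in (F - {{u, v}}) r v"

text \<open>A rooted planar embedding of the tree (V,F) with root r: for each vertex,
a linear order (list without repetitions) of its children.\<close>
definition planar_rooted :: "'a set \<Rightarrow> 'a set set \<Rightarrow> 'a \<Rightarrow> ('a \<Rightarrow> 'a list) \<Rightarrow> bool" where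
  "planar_rooted V F r ch \<longleftrightarrow> r \<in> V \<and>
     (\<forall>v\<in>V. distinct (ch v) \<and> set (ch v) = {u. child_of F r u v})"

definition first_child_edges :: "'a set \<Rightarrow> 'a set set \<Rightarrow> ('a \<Rightarrow> 'a list) \<Rightarrow> 'a set set" where
  "first_child_edges V F ch = {{v, hd (ch v)} | v. v \<in> V \<and> deg F v \<ge> 2}"

text \<open>The tree associated to ((V,F),E) with capacities cap has distributable capacity:
its vertices are the components C of (V, F - E), the capacity of C is the sum of the
capacities of its vertices, and its degree is the number of edges of E incident to C
(edges of E join distinct components since (V,F) is a tree).\<close>
definition assoc_distributable :: "'a set \<Rightarrow> 'a set set \<Rightarrow> 'a set set \<Rightarrow> ('a \<Rightarrow> int) \<Rightarrow> bool" where
  "assoc_distributable V F E cap \<longleftrightarrow>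
     (\<forall>C\<in>comps V (F - E). sum cap C \<ge> int (card {e \<in> E. e \<inter> C \<noteq> {}}) - 1)"

end

theory Submission
  imports Defs
begin

text \<open>Let E be the set of first-child edges and C a vertex set connected in T - E.
An edge of E meeting C either joins a vertex of C to its first child, and there are at
most |C| of these, or it enters C from a parent outside C. There is at most one edge of
the second kind: two of them would be distinct edges leading down to two children that
are connected inside C, which together with the paths from the root to their parents
would close a cycle. So at most |C| + 1 edges of E meet C, which is the distributability
inequality for unit capacities. For a component U of T - E' every component of
U - (E \<inter> E(U)) is again connected in T - E and meets fewer edges, so the same bound
applies.\<close>

lemma connected_in_refl: "connected_in F x x"
  by (simp add: connected_in_def)

lemma connected_in_sym:
  assumes "connected_in F x y"
  shows "connected_in F y x"
proof -
  have "(adj F)\<inverse> = adj F"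
    by (auto simp: adj_def insert_commute)
  then show ?thesis
    using assms by (metis connected_in_def rtrancl_converseI)
qed

lemma connected_in_trans: "connected_in F x y \<Longrightarrow> connected_in F y z \<Longrightarrow> connected_in F x z"
  by (simp add: connected_in_def)

lemma connected_in_mono:
  assumes "F \<subseteq> G" and "connected_in F x y"
  shows "connected_in G x y"
proof -
  have "adj F \<subseteq> adj G"
    using assms(1) by (auto simp: adj_def)
  then show ?thesis
    using assms(2) rtrancl_mono unfolding connected_in_def by blast
qed

lemma connected_in_edge: "{x, y} \<in> F \<Longrightarrow> connected_in F x y"
  by (simp add: connected_in_def adj_def r_into_rtrancl)

lemma connected_in_remove_edge:
  assumes "connected_in G x y"
  shows "connected_in (G - {{a, b}}) x y
    \<or> connected_in (G - {{a, b}}) x a \<and> connected_in (G - {{a, b}}) b y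
    \<or> connected_in (G - {{a, b}}) x b \<and> connected_in (G - {{a, b}}) a y"
  using assms unfolding connected_in_def
proof (induction rule: rtrancl_induct)
  case base
  then show ?case by simp
next
  case (step y z)
  show ?case
  proof (cases "{y, z} = {a, b}")
    case True
    then have "y = a \<and> z = b \<or> y = b \<and> z = a"
      by (simp add: doubleton_eq_iff)
    then show ?thesis
      using step.IH connected_in_refl[of "G - {{a, b}}"] connected_in_trans[of "G - {{a, b}}"]
        connected_in_sym[of "G - {{a, b}}"]
      unfolding connected_in_def by metis
  next
    case False
    with step.hyps(2) have "connected_in (G - {{a, b}}) y z"
      by (intro connected_in_edge) (auto simp: adj_def)
    then show ?thesis
      using step.IH connected_in_trans[of "G - {{a, b}}"] unfolding connected_in_def by metis
  qed
qed

lemma comps_connected: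
  assumes "C \<in> comps V G"
  shows "C \<subseteq> V" and "\<forall>x\<in>C. \<forall>y\<in>C. connected_in G x y"
  using assms unfolding comps_def
  by (auto elim!: quotientE intro: connected_in_trans connected_in_sym)

lemma child_edge_avoids_root_side:
  assumes bridges: "\<forall>x y. {x, y} \<in> F \<longrightarrow> \<not> connected_in (F - {{x, y}}) x y"
    and child: "child_of F r c1 p1" and edge: "{c2, p2} \<in> F" and ne: "{c1, p1} \<noteq> {c2, p2}"
    and conn: "connected_in (F - {{c1, p1}, {c2, p2}}) c1 c2"
  shows "\<not> connected_in (F - {{c1, p1}}) r p2"
proof
  assume root_p2: "connected_in (F - {{c1, p1}}) r p2"
  have "connected_in (F - {{c1, p1}}) c1 c2"
    using conn by (rule connected_in_mono[rotated]) auto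
  moreover have "connected_in (F - {{c1, p1}}) c2 p2"
    using edge ne by (intro connected_in_edge) auto
  moreover have "connected_in (F - {{c1, p1}}) r p1"
    using child by (simp add: child_of_def)
  ultimately have "connected_in (F - {{c1, p1}}) c1 p1"
    using root_p2 by (meson connected_in_sym connected_in_trans)
  with bridges child show False
    by (simp add: child_of_def)
qed

lemma child_edges_separate_children:
  assumes bridges: "\<forall>x y. {x, y} \<in> F \<longrightarrow> \<not> connected_in (F - {{x, y}}) x y"
    and child1: "child_of F r c1 p1" and child2: "child_of F r c2 p2"
    and ne: "{c1, p1} \<noteq> {c2, p2}"
  shows "\<not> connected_in (F - {{c1, p1}, {c2, p2}}) c1 c2"
proof
  let ?R = "connected_in (F - {{c1, p1}, {c2, p2}})"
  assume conn: "?R c1 c2"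
  have no_r_p2: "\<not> connected_in (F - {{c1, p1}}) r p2"
    using child_edge_avoids_root_side[OF bridges child1 _ ne conn] child2
    by (simp add: child_of_def)
  have "{{c2, p2}, {c1, p1}} = {{c1, p1}, {c2, p2}}"
    by auto
  then have no_r_p1: "\<not> connected_in (F - {{c2, p2}}) r p1"
    using child_edge_avoids_root_side[OF bridges child2 _ ne[symmetric]] child1 conn
    by (simp add: child_of_def connected_in_sym)
  have R_S1: "?R x y \<Longrightarrow> connected_in (F - {{c1, p1}}) x y" for x y
    by (erule connected_in_mono[rotated]) auto
  have R_S2: "?R x y \<Longrightarrow> connected_in (F - {{c2, p2}}) x y" for x y
    by (erule connected_in_mono[rotated]) auto
  have "connected_in (F - {{c2, p2}}) r p2"
    using child2 by (simp add: child_of_def)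
  moreover have "F - {{c2, p2}} - {{c1, p1}} = F - {{c1, p1}, {c2, p2}}"
    by auto
  ultimately consider "?R r p2" | "?R p1 p2" | "?R r p1"
    using connected_in_remove_edge[of "F - {{c2, p2}}" r p2 c1 p1] by auto
  then show False
  proof cases
    case 1
    then show False
      using R_S1 no_r_p2 by blast
  next
    case 2
    have "connected_in (F - {{c1, p1}}) r p2"
      by (rule connected_in_trans[OF _ R_S1[OF 2]]) (use child1 in \<open>simp add: child_of_def\<close>)
    with no_r_p2 show False ..
  next
    case 3
    then show False
      using R_S2 no_r_p1 by blast
  qed
qed

lemma parent_unique:
  assumes "is_tree V F" and "child_of F r v u1" and "child_of F r v u2"
  shows "u1 = u2"
proof (rule ccontr)
  assume "u1 \<noteq> u2"
  then have "{v, u1} \<noteq> {v, u2}"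
    by (auto simp: doubleton_eq_iff)
  then have "\<not> connected_in (F - {{v, u1}, {v, u2}}) v v"
    using assms child_edges_separate_children[of F r v u1 v u2] by (simp add: is_tree_def)
  then show False
    by (simp add: connected_in_refl)
qed

lemma tree_edge_child_or_parent:
  assumes tree: "is_tree V F" and "r \<in> V" and "v \<in> V" and edge: "{v, u} \<in> F"
  shows "child_of F r u v \<or> child_of F r v u"
proof -
  have "connected_in F r v"
    using assms by (simp add: is_tree_def)
  then have "connected_in (F - {{v, u}}) r v \<or> connected_in (F - {{v, u}}) r u"
    using connected_in_remove_edge[of F r v v u] by auto
  then show ?thesis
    using edge by (auto simp: child_of_def insert_commute)
qed

lemma two_incident_edges:
  assumes "graph V F" and "2 \<le> deg F v"
  obtains u1 u2 where "u1 \<noteq> u2" and "{v, u1} \<in> F" and "{v, u2} \<in> F"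
proof -
  have "{e \<in> F. v \<in> e} \<subseteq> Pow V"
    using assms(1) by (auto simp: graph_def)
  then have "finite {e \<in> F. v \<in> e}"
    using assms(1) by (auto simp: graph_def intro: finite_subset)
  moreover have "\<not> card {e \<in> F. v \<in> e} \<le> Suc 0"
    using assms(2) by (simp add: deg_def)
  ultimately have "\<not> (\<forall>e1\<in>{e \<in> F. v \<in> e}. \<forall>e2\<in>{e \<in> F. v \<in> e}. e1 = e2)"
    by (simp add: card_le_Suc0_iff_eq)
  then obtain e1 e2 where e: "e1 \<in> F" "v \<in> e1" "e2 \<in> F" "v \<in> e2" "e1 \<noteq> e2"
    by blast
  have "card e1 = 2" "card e2 = 2"
    using assms(1) e by (auto simp: graph_def)
  then obtain u1 u2 where "e1 = {v, u1}" "e2 = {v, u2}"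
    using e(2,4) by (auto simp: card_2_iff)
  with e that show ?thesis
    by blast
qed

lemma first_child_is_child:
  assumes tree: "is_tree V F" and emb: "planar_rooted V F r ch"
    and v: "v \<in> V" and nonleaf: "2 \<le> deg F v"
  shows "child_of F r (hd (ch v)) v"
proof -
  have r: "r \<in> V" and children: "set (ch v) = {u. child_of F r u v}"
    using emb v by (auto simp: planar_rooted_def)
  obtain u1 u2 where "u1 \<noteq> u2" and "{v, u1} \<in> F" and "{v, u2} \<in> F"
    using two_incident_edges tree nonleaf by (metis is_tree_def)
  then have "\<exists>u. child_of F r u v"
    using tree_edge_child_or_parent[OF tree r v] parent_unique[OF tree] by metis
  then have "ch v \<noteq> []"
    using children by auto
  then show ?thesis
    using children hd_in_set by fastforce
qed

lemma first_child_edges_eq_image: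
  "first_child_edges V F ch = (\<lambda>v. {v, hd (ch v)}) ` {v \<in> V. 2 \<le> deg F v}"
  by (auto simp: first_child_edges_def)

lemma first_child_edges_eq_if_first_children_connected:
  assumes tree: "is_tree V F" and emb: "planar_rooted V F r ch"
    and v1: "v1 \<in> V" "2 \<le> deg F v1" and v2: "v2 \<in> V" "2 \<le> deg F v2"
    and conn: "connected_in (F - first_child_edges V F ch) (hd (ch v1)) (hd (ch v2))"
  shows "{v1, hd (ch v1)} = {v2, hd (ch v2)}"
proof (rule ccontr)
  assume ne: "{v1, hd (ch v1)} \<noteq> {v2, hd (ch v2)}"
  have "connected_in (F - {{hd (ch v1), v1}, {hd (ch v2), v2}}) (hd (ch v1)) (hd (ch v2))"
    using conn by (rule connected_in_mono[rotated]) (use v1 v2 in \<open>auto simp: first_child_edges_def\<close>)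
  moreover have "{hd (ch v1), v1} \<noteq> {hd (ch v2), v2}"
    using ne by (simp add: insert_commute)
  ultimately show False
    using child_edges_separate_children first_child_is_child[OF tree emb v1]
      first_child_is_child[OF tree emb v2] tree
    by (metis is_tree_def)
qed

lemma card_first_child_edges_meeting_le:
  assumes tree: "is_tree V F" and emb: "planar_rooted V F r ch" and CV: "C \<subseteq> V"
    and conn: "\<forall>x\<in>C. \<forall>y\<in>C. connected_in (F - first_child_edges V F ch) x y"
  shows "card {e \<in> first_child_edges V F ch. e \<inter> C \<noteq> {}} \<le> card C + 1"
proof -
  let ?E = "first_child_edges V F ch"
  let ?edge = "\<lambda>v. {v, hd (ch v)}"
  define Down where "Down = ?edge ` {v \<in> C. 2 \<le> deg F v}"
  define Up where "Up = ?edge ` {v \<in> V. 2 \<le> deg F v \<and> hd (ch v) \<in> C}"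
  have "finite V"
    using tree by (simp add: is_tree_def graph_def)
  then have fin: "finite C" "finite Up"
    using CV finite_subset unfolding Up_def by auto
  have "{e \<in> ?E. e \<inter> C \<noteq> {}} \<subseteq> Down \<union> Up"
    using CV unfolding first_child_edges_eq_image Down_def Up_def by auto
  then have "card {e \<in> ?E. e \<inter> C \<noteq> {}} \<le> card (Down \<union> Up)"
    using fin by (intro card_mono) (auto simp: Down_def)
  also have "\<dots> \<le> card Down + card Up"
    by (rule card_Un_le)
  also have "card Down \<le> card C"
    unfolding Down_def using fin by (intro card_image_le[THEN order_trans] card_mono) auto
  also have "card Up \<le> 1"
    using fin(2) conn first_child_edges_eq_if_first_children_connected[OF tree emb]
    unfolding Up_def by (auto simp: card_le_Suc0_iff_eq)
  finally show ?thesis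
    by simp
qed

lemma first_child_edges_subset:
  assumes "is_tree V F" and "planar_rooted V F r ch"
  shows "first_child_edges V F ch \<subseteq> F"
  using first_child_is_child[OF assms]
  by (auto simp: first_child_edges_def child_of_def insert_commute)

lemma assoc_distributable_first_child_edges:
  assumes tree: "is_tree V F" and emb: "planar_rooted V F r ch"
    and UV: "U \<subseteq> V" and GF: "G \<subseteq> F"
  shows "assoc_distributable U G (first_child_edges V F ch \<inter> G) (\<lambda>_. 1)"
  unfolding assoc_distributable_def
proof
  let ?E = "first_child_edges V F ch"
  fix C
  assume C: "C \<in> comps U (G - ?E \<inter> G)"
  have sub: "G - ?E \<inter> G \<subseteq> F - ?E"
    using GF by blast
  have "C \<subseteq> V"
    using comps_connected(1)[OF C] UV by blast
  moreover have "\<forall>x\<in>C. \<forall>y\<in>C. connected_in (F - ?E) x y"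
    using comps_connected(2)[OF C] connected_in_mono[OF sub] by blast
  ultimately have "card {e \<in> ?E. e \<inter> C \<noteq> {}} \<le> card C + 1"
    by (rule card_first_child_edges_meeting_le[OF tree emb])
  moreover have "finite ?E"
    using tree by (simp add: first_child_edges_eq_image is_tree_def graph_def)
  then have "card {e \<in> ?E \<inter> G. e \<inter> C \<noteq> {}} \<le> card {e \<in> ?E. e \<inter> C \<noteq> {}}"
    by (intro card_mono) auto
  ultimately show "int (card {e \<in> ?E \<inter> G. e \<inter> C \<noteq> {}}) - 1 \<le> sum (\<lambda>_. 1) C"
    by simp
qed

theorem mainTheorem5:
  fixes V :: "'a set" and F :: "'a set set" and r :: 'a and ch :: "'a \<Rightarrow> 'a list"
  assumes tree: "is_tree V F"
    and emb: "planar_rooted V F r ch"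
    and root_leaf: "deg F r \<le> 1"
  shows "assoc_distributable V F (first_child_edges V F ch) (\<lambda>_. 1)
       \<and> (\<forall>E'. E' \<subseteq> F \<and> E' \<inter> first_child_edges V F ch = {} \<longrightarrow>
            (\<forall>U\<in>comps V (F - E').
               assoc_distributable U {e \<in> F. e \<subseteq> U}
                 (first_child_edges V F ch \<inter> {e \<in> F. e \<subseteq> U}) (\<lambda>_. 1)))"
proof (intro conjI allI impI ballI)
  have "first_child_edges V F ch \<inter> F = first_child_edges V F ch"
    using first_child_edges_subset[OF tree emb] by blast
  then show "assoc_distributable V F (first_child_edges V F ch) (\<lambda>_. 1)"
    using assoc_distributable_first_child_edges[OF tree emb, of V F] by simp
next
  fix E' U
  assume "U \<in> comps V (F - E')"
  then have "U \<subseteq> V"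
    by (rule comps_connected)
  then show "assoc_distributable U {e \<in> F. e \<subseteq> U}
      (first_child_edges V F ch \<inter> {e \<in> F. e \<subseteq> U}) (\<lambda>_. 1)"
    by (rule assoc_distributable_first_child_edges[OF tree emb]) blast
qed

end
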